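(* Let $X$ be a nonempty set, let $n\geq 1$, and let $f_1,\dots,f_n:X\to\mathbb{R}$ be arbitrary functions. Then there exists $(\lambda_1,\dots,\lambda_n)\in S_n$ such that \[ 0\leq \lambda_1 f_1(x)+\dots+\lambda_n f_n(x)\qquad (x\in X) \] if and only if \[ 0\leq \max_{i\in\{1,\dots,n\}}\big(t_1 f_i(x_1)+\dots+t_n f_i(x_n)\big)\qquad (x_1,\dots,x_n\in X,\ (t_1,\dots,t_n)\in S_n). \]
   Context: For a positive integer $n$, $S_n$ denotes the simplex $\{(\lambda_1,\dots,\lambda_n)\in\mathbb{R}^n \mid \lambda_1,\dots,\lambda_n\geq 0,\ \lambda_1+\dots+\lambda_n=1\}$. *)

theory Defs
  imports Complex_Main
begin

text \<open>The simplex S_n, with vectors in R^n represented as functions nat => real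
  indexed by 0..n-1 (entries at indices >= n fixed to 0).\<close>
definition simplex :: "nat \<Rightarrow> (nat \<Rightarrow> real) set" where
  "simplex n = {l. (\<forall>i<n. 0 \<le> l i) \<and> (\<forall>i\<ge>n. l i = 0) \<and> (\<Sum>i<n. l i) = 1}"

end

theory Submission
  imports Defs "HOL-Analysis.Function_Topology"
begin

text \<open>Left to right is averaging: weighting the \<open>n\<close> numbers inside the maximum by \<open>\<lambda>\<close>
  gives a nonnegative number. Conversely, write \<open>v x = (f\<^sub>1 x, \<dots>, f\<^sub>n x)\<close>. The
  right-hand side says that no convex combination of \<open>n\<close> points \<open>v x\<close> lies in the open
  negative orthant; as the orthant is a cone, a Caratheodory-type reduction extends this to
  convex combinations of finitely many points. For finitely many points shifted by
  \<open>\<epsilon> (1, \<dots>, 1)\<close>, minimising the squared distance to the closed negative orthant over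
  the weights yields \<open>\<lambda> \<in> S\<^sub>n\<close> with \<open>\<lambda> \<bullet> v x \<ge> -\<epsilon>\<close>. Compactness of \<open>S\<^sub>n\<close>
  (finite intersection property in the product topology) removes both \<open>\<epsilon>\<close> and the
  finiteness.\<close>

definition convex_weights :: "'k set \<Rightarrow> ('k \<Rightarrow> real) set" where
  "convex_weights K = {t. (\<forall>k\<in>K. 0 \<le> t k) \<and> (\<forall>k. k \<notin> K \<longrightarrow> t k = 0) \<and> sum t K = 1}"

lemma simplex_eq_convex_weights: "simplex n = convex_weights {..<n}"
  by (auto simp: simplex_def convex_weights_def not_less)

lemma convex_weights_nonneg: "t \<in> convex_weights K \<Longrightarrow> 0 \<le> t k"
  by (cases "k \<in> K") (auto simp: convex_weights_def)

lemma convex_weights_le_one: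
  assumes "finite K" "t \<in> convex_weights K"
  shows "t k \<le> 1"
proof (cases "k \<in> K")
  case True
  then have "t k \<le> sum t K"
    using assms by (intro member_le_sum) (auto simp: convex_weights_def)
  then show ?thesis
    using assms by (simp add: convex_weights_def)
qed (use assms in \<open>auto simp: convex_weights_def\<close>)

lemma vertex_in_convex_weights:
  assumes "finite K" "k \<in> K"
  shows "(\<lambda>j. if j = k then 1 else 0) \<in> convex_weights K"
  using assms by (auto simp: convex_weights_def)

lemma convex_weights_segment:
  assumes "s \<in> convex_weights K" "t \<in> convex_weights K" "0 \<le> u" "u \<le> 1"
  shows "(\<lambda>k. (1 - u) * s k + u * t k) \<in> convex_weights K"
  using assms
  by (simp add: convex_weights_def sum.distrib flip: sum_distrib_left)

lemma closedin_convex_weights: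
  assumes "finite K"
  shows "closedin (powertop_real UNIV) (convex_weights K)" (is "closedin ?X _")
proof -
  have eq: "convex_weights K =
          (\<Inter>k. {t \<in> topspace ?X. t k \<in> (if k \<in> K then {0..} else {0})}) \<inter>
          {t \<in> topspace ?X. sum t K \<in> {1}}"
    by (auto simp: convex_weights_def) (metis atLeast_iff, metis singletonD)
  show ?thesis
    unfolding eq
    by (intro closedin_Int closedin_INT closedin_continuous_map_preimage[where Y = euclideanreal]
        continuous_map_sum continuous_map_product_projection) (auto simp: assms)
qed

lemma compactin_convex_weights:
  assumes "finite K"
  shows "compactin (powertop_real UNIV) (convex_weights K)"
proof (rule closed_compactin)
  show "compactin (powertop_real UNIV) (UNIV \<rightarrow>\<^sub>E {0..1})"
    by (simp add: compactin_PiE)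
  show "convex_weights K \<subseteq> UNIV \<rightarrow>\<^sub>E {0..1}"
    using assms convex_weights_nonneg convex_weights_le_one by fastforce
qed (rule closedin_convex_weights[OF assms])

lemma exists_linear_dependence:
  fixes v :: "'k \<Rightarrow> nat \<Rightarrow> real"
  assumes "finite K" "n < card K"
  shows "\<exists>\<mu>. (\<exists>k\<in>K. \<mu> k \<noteq> 0) \<and> (\<forall>i<n. (\<Sum>k\<in>K. \<mu> k * v k i) = 0)"
  using assms
proof (induction n arbitrary: K v)
  case 0
  then obtain k where "k \<in> K"
    by fastforce
  then show ?case
    by (intro exI[of _ "\<lambda>_. 1"]) auto
next
  case (Suc n)
  show ?case
  proof (cases "\<forall>k\<in>K. v k n = 0")
    case True
    from Suc.IH[of K v] Suc.prems obtain \<mu> where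
      \<mu>: "\<exists>k\<in>K. \<mu> k \<noteq> 0" "\<forall>i<n. (\<Sum>k\<in>K. \<mu> k * v k i) = 0"
      by auto
    have "(\<Sum>k\<in>K. \<mu> k * v k i) = 0" if "i < Suc n" for i
      using \<mu>(2) True that less_Suc_eq by auto
    with \<mu>(1) show ?thesis
      by blast
  next
    case False
    then obtain j where j: "j \<in> K" "v j n \<noteq> 0"
      by auto
    define w where "w k i = v k i - (v k n / v j n) * v j i" for k i
    have "finite (K - {j})" "n < card (K - {j})"
      using Suc.prems j by auto
    from Suc.IH[OF this, of w] obtain \<nu> where
      \<nu>: "\<exists>k\<in>K - {j}. \<nu> k \<noteq> 0" "\<forall>i<n. (\<Sum>k\<in>K - {j}. \<nu> k * w k i) = 0"
      by auto
    define S where "S = (\<Sum>k\<in>K - {j}. \<nu> k * v k n)"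
    define \<mu> where "\<mu> k = (if k = j then - (S / v j n) else \<nu> k)" for k
    have split: "(\<Sum>k\<in>K. \<mu> k * v k i) = (\<Sum>k\<in>K - {j}. \<nu> k * v k i) - (S / v j n) * v j i" for i
      using Suc.prems(1) j(1) by (simp add: sum.remove \<mu>_def)
    have "(\<Sum>k\<in>K. \<mu> k * v k i) = 0" if "i < Suc n" for i
    proof (cases "i = n")
      case True
      then show ?thesis
        using split j(2) by (simp add: S_def)
    next
      case False
      then have "0 = (\<Sum>k\<in>K - {j}. \<nu> k * w k i)"
        using \<nu>(2) that by simp
      also have "\<dots> = (\<Sum>k\<in>K - {j}. \<nu> k * v k i) - (S / v j n) * v j i"
        by (simp add: w_def S_def algebra_simps sum_subtractf sum_distrib_left
            sum_divide_distrib sum_distrib_right)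
      finally show ?thesis
        using split by simp
    qed
    moreover have "\<exists>k\<in>K. \<mu> k \<noteq> 0"
      using \<nu>(1) by (auto simp: \<mu>_def)
    ultimately show ?thesis
      by blast
  qed
qed

lemma exists_linear_dependence_negative:
  fixes v :: "'k \<Rightarrow> nat \<Rightarrow> real"
  assumes "finite K" "n < card K"
  obtains \<mu> k\<^sub>0 where "k\<^sub>0 \<in> K" "\<mu> k\<^sub>0 < 0" "\<forall>i<n. (\<Sum>k\<in>K. \<mu> k * v k i) = 0"
proof -
  obtain \<mu> k\<^sub>0 where \<mu>: "k\<^sub>0 \<in> K" "\<mu> k\<^sub>0 \<noteq> 0" "\<forall>i<n. (\<Sum>k\<in>K. \<mu> k * v k i) = 0"
    using exists_linear_dependence[OF assms] by blast
  show ?thesis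
  proof (cases "\<mu> k\<^sub>0 < 0")
    case True
    with \<mu> that show ?thesis
      by blast
  next
    case False
    with \<mu> have "- \<mu> k\<^sub>0 < 0" "\<forall>i<n. (\<Sum>k\<in>K. - \<mu> k * v k i) = 0"
      by (simp_all add: sum_negf)
    with \<mu>(1) show ?thesis
      by (rule that)
  qed
qed

lemma exists_nonneg_shift_vanishing:
  fixes t \<mu> :: "'k \<Rightarrow> real"
  assumes "finite K" "\<forall>k\<in>K. 0 \<le> t k" "k\<^sub>0 \<in> K" "\<mu> k\<^sub>0 < 0"
  obtains s j where "0 \<le> s" "j \<in> K" "t j + s * \<mu> j = 0" "\<forall>k\<in>K. 0 \<le> t k + s * \<mu> k"
proof -
  define R where "R = {k\<in>K. \<mu> k < 0}"
  have "finite R" "R \<noteq> {}"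
    using assms R_def by auto
  define s where "s = Min ((\<lambda>k. t k / - \<mu> k) ` R)"
  have "s \<in> (\<lambda>k. t k / - \<mu> k) ` R"
    unfolding s_def using \<open>finite R\<close> \<open>R \<noteq> {}\<close> by (intro Min_in) auto
  then obtain j where j: "j \<in> R" "s = t j / - \<mu> j"
    by blast
  have "0 \<le> s"
    unfolding j(2) using j(1) assms(2) by (intro divide_nonneg_pos) (auto simp: R_def)
  moreover have "t j + s * \<mu> j = 0"
    using j by (auto simp: R_def)
  moreover have "0 \<le> t k + s * \<mu> k" if "k \<in> K" for k
  proof (cases "\<mu> k < 0")
    case True
    then have "s \<le> t k / - \<mu> k"
      unfolding s_def using \<open>finite R\<close> that by (simp add: R_def)
    then have "s * - \<mu> k \<le> t k / - \<mu> k * - \<mu> k"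
      using True by (intro mult_right_mono) auto
    then show ?thesis
      using True by simp
  next
    case False
    then show ?thesis
      using \<open>0 \<le> s\<close> assms(2) that by simp
  qed
  ultimately show ?thesis
    using that j(1) R_def by blast
qed

text \<open>Since the open negative orthant is a cone, a linear (rather than affine) dependence
  among the points suffices to drop one of them after renormalising the weights; hence
  \<open>n\<close> points suffice instead of the \<open>n + 1\<close> of Caratheodory's theorem.\<close>

lemma caratheodory_negative_orthant_step:
  fixes v :: "'k \<Rightarrow> nat \<Rightarrow> real"
  assumes "1 \<le> n" "finite K" "n < card K" "\<forall>k\<in>K. 0 \<le> t k" "sum t K = 1"
    and neg: "\<forall>i<n. (\<Sum>k\<in>K. t k * v k i) < 0"
  obtains j t' where "j \<in> K" "\<forall>k\<in>K - {j}. 0 \<le> t' k" "sum t' (K - {j}) = 1"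
    "\<forall>i<n. (\<Sum>k\<in>K - {j}. t' k * v k i) < 0"
proof -
  obtain \<mu> k\<^sub>0 where \<mu>: "k\<^sub>0 \<in> K" "\<mu> k\<^sub>0 < 0" "\<forall>i<n. (\<Sum>k\<in>K. \<mu> k * v k i) = 0"
    using exists_linear_dependence_negative[OF assms(2,3)] by blast
  obtain s j where s: "j \<in> K" "t j + s * \<mu> j = 0" "\<forall>k\<in>K. 0 \<le> t k + s * \<mu> k"
    using exists_nonneg_shift_vanishing[of K t k\<^sub>0 \<mu>, OF assms(2,4) \<mu>(1,2)] by blast
  define \<tau> where "\<tau> k = t k + s * \<mu> k" for k
  have sum_remove_j: "(\<Sum>k\<in>K - {j}. \<tau> k * g k) = (\<Sum>k\<in>K. \<tau> k * g k)" for g :: "'k \<Rightarrow> real"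
    using assms(2) s(1,2) by (simp add: sum.remove \<tau>_def)
  have \<tau>_combination: "(\<Sum>k\<in>K. \<tau> k * v k i) = (\<Sum>k\<in>K. t k * v k i)" if "i < n" for i
    using \<mu>(3) that
    by (simp add: \<tau>_def distrib_right sum.distrib mult.assoc flip: sum_distrib_left)
  define S where "S = (\<Sum>k\<in>K - {j}. \<tau> k)"
  have "S \<noteq> 0"
  proof
    assume "S = 0"
    then have "\<forall>k\<in>K - {j}. \<tau> k = 0"
      using assms(2) s(3) sum_nonneg_eq_0_iff[of "K - {j}" \<tau>] by (auto simp: S_def \<tau>_def)
    then have "(\<Sum>k\<in>K - {j}. \<tau> k * v k 0) = 0"
      by simp
    then show False
      using neg assms(1) sum_remove_j \<tau>_combination by fastforce
  qed
  moreover have "0 \<le> S"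
    unfolding S_def \<tau>_def using s(3) by (intro sum_nonneg) auto
  ultimately have "0 < S"
    by simp
  define t' where "t' k = \<tau> k / S" for k
  have "\<forall>k\<in>K - {j}. 0 \<le> t' k"
    using s(3) \<open>0 < S\<close> by (simp add: t'_def \<tau>_def)
  moreover have "sum t' (K - {j}) = 1"
    using \<open>0 < S\<close> by (simp add: t'_def S_def flip: sum_divide_distrib)
  moreover have "(\<Sum>k\<in>K - {j}. t' k * v k i) < 0" if "i < n" for i
  proof -
    have "(\<Sum>k\<in>K - {j}. t' k * v k i) = (\<Sum>k\<in>K - {j}. \<tau> k * v k i) / S"
      by (simp add: t'_def sum_divide_distrib)
    also have "\<dots> = (\<Sum>k\<in>K. t k * v k i) / S"
      using sum_remove_j \<tau>_combination that by simp
    finally show ?thesis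
      using neg that \<open>0 < S\<close> by (simp add: divide_neg_pos)
  qed
  ultimately show ?thesis
    using that s(1) by blast
qed

lemma caratheodory_negative_orthant:
  fixes v :: "'k \<Rightarrow> nat \<Rightarrow> real"
  assumes "1 \<le> n" "finite K" "\<forall>k\<in>K. 0 \<le> t k" "sum t K = 1"
    and "\<forall>i<n. (\<Sum>k\<in>K. t k * v k i) < 0"
  obtains K' t' where "K' \<subseteq> K" "card K' \<le> n" "\<forall>k\<in>K'. 0 \<le> t' k" "sum t' K' = 1"
    "\<forall>i<n. (\<Sum>k\<in>K'. t' k * v k i) < 0"
proof -
  have "\<exists>K' t'. K' \<subseteq> K \<and> card K' \<le> n \<and> (\<forall>k\<in>K'. 0 \<le> t' k) \<and> sum t' K' = 1 \<and>
      (\<forall>i<n. (\<Sum>k\<in>K'. t' k * v k i) < 0)"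
    using assms(2-)
  proof (induction "card K" arbitrary: K t rule: less_induct)
    case less
    show ?case
    proof (cases "card K \<le> n")
      case True
      then show ?thesis
        using less.prems by blast
    next
      case False
      then have "n < card K"
        by simp
      then obtain j t' where j: "j \<in> K" "\<forall>k\<in>K - {j}. 0 \<le> t' k" "sum t' (K - {j}) = 1"
        "\<forall>i<n. (\<Sum>k\<in>K - {j}. t' k * v k i) < 0"
        using caratheodory_negative_orthant_step[OF assms(1) less.prems(1) _ less.prems(2-)]
        by blast
      have "card (K - {j}) < card K"
        using less.prems(1) j(1) by (rule card_Diff1_less)
      with less.hyps[OF this _ j(2-4)] less.prems(1) show ?thesis
        by blast
    qed
  qed
  then show ?thesis
    using that by blast
qed

lemma convex_combination_as_simplex_tuple:
  fixes t :: "'a \<Rightarrow> real"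
  assumes "finite K" "card K \<le> n" "K \<subseteq> X" "x\<^sub>0 \<in> X" "\<forall>x\<in>K. 0 \<le> t x" "sum t K = 1"
  obtains xs l where "\<forall>k<n. xs k \<in> X" "l \<in> simplex n"
    "\<And>g. (\<Sum>k<n. l k * g (xs k)) = (\<Sum>x\<in>K. t x * g x)"
proof -
  obtain e where e: "bij_betw e {..<card K} K"
    using assms(1) ex_bij_betw_nat_finite lessThan_atLeast0 by metis
  define xs where "xs k = (if k < card K then e k else x\<^sub>0)" for k
  define l where "l k = (if k < card K then t (e k) else 0)" for k
  have sum_eq: "(\<Sum>k<n. l k * g (xs k)) = (\<Sum>x\<in>K. t x * g x)" for g
  proof -
    have "(\<Sum>k<n. l k * g (xs k)) = (\<Sum>k<card K. t (e k) * g (e k))"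
      using assms(2) by (intro sum.mono_neutral_cong_right) (auto simp: l_def xs_def)
    also have "\<dots> = (\<Sum>x\<in>K. t x * g x)"
      using sum.reindex_bij_betw[OF e] .
    finally show ?thesis .
  qed
  have "\<forall>k<n. xs k \<in> X"
    using e assms(3,4) bij_betwE by (fastforce simp: xs_def)
  moreover have "l \<in> simplex n"
    using sum_eq[of "\<lambda>_. 1"] e assms(2,5,6) bij_betwE
    by (fastforce simp: simplex_def l_def)
  ultimately show ?thesis
    using that sum_eq by blast
qed

lemma simplex_combination_le_Max:
  assumes "l \<in> simplex n"
  shows "(\<Sum>i<n. l i * a i) \<le> Max (a ` {..<n})"
proof -
  have "(\<Sum>i<n. l i * a i) \<le> (\<Sum>i<n. l i * Max (a ` {..<n}))"
    using assms by (intro sum_mono mult_left_mono) (auto simp: simplex_def)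
  also have "\<dots> = Max (a ` {..<n})"
    using assms by (simp add: simplex_def flip: sum_distrib_right)
  finally show ?thesis .
qed

lemma Max_nonneg_if_simplex_nonneg:
  fixes f :: "nat \<Rightarrow> 'a \<Rightarrow> real"
  assumes "l \<in> simplex n" "\<forall>x\<in>X. 0 \<le> (\<Sum>j<n. l j * f j x)"
    and "\<forall>k<n. xs k \<in> X" "t \<in> simplex n"
  shows "0 \<le> Max ((\<lambda>i. \<Sum>k<n. t k * f i (xs k)) ` {..<n})"
proof -
  have "0 \<le> (\<Sum>k<n. t k * (\<Sum>i<n. l i * f i (xs k)))"
    by (rule sum_nonneg, rule mult_nonneg_nonneg) (use assms(2-4) in \<open>auto simp: simplex_def\<close>)
  also have "\<dots> = (\<Sum>i<n. l i * (\<Sum>k<n. t k * f i (xs k)))"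
    unfolding sum_distrib_left by (subst sum.swap) (simp add: mult.left_commute)
  also have "\<dots> \<le> Max ((\<lambda>i. \<Sum>k<n. t k * f i (xs k)) ` {..<n})"
    using assms(1) by (rule simplex_combination_le_Max)
  finally show ?thesis .
qed

lemma convex_combination_has_nonneg_coordinate:
  fixes f :: "nat \<Rightarrow> 'a \<Rightarrow> real"
  assumes "1 \<le> n" "X \<noteq> {}"
    and max_nonneg: "\<forall>xs. (\<forall>k<n. xs k \<in> X) \<longrightarrow> (\<forall>t\<in>simplex n.
          0 \<le> Max ((\<lambda>i. \<Sum>k<n. t k * f i (xs k)) ` {..<n}))"
    and "finite K" "K \<subseteq> X" "\<forall>x\<in>K. 0 \<le> t x" "sum t K = 1"
  shows "\<exists>i<n. 0 \<le> (\<Sum>x\<in>K. t x * f i x)"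
proof (rule ccontr)
  assume "\<not> (\<exists>i<n. 0 \<le> (\<Sum>x\<in>K. t x * f i x))"
  then have "\<forall>i<n. (\<Sum>x\<in>K. t x * f i x) < 0"
    by auto
  then obtain K' t' where K': "K' \<subseteq> K" "card K' \<le> n" "\<forall>x\<in>K'. 0 \<le> t' x" "sum t' K' = 1"
    "\<forall>i<n. (\<Sum>x\<in>K'. t' x * f i x) < 0"
    using caratheodory_negative_orthant[of n K t "\<lambda>x i. f i x"] assms(1,4,6,7)
    by blast
  obtain x\<^sub>0 where "x\<^sub>0 \<in> X"
    using assms(2) by blast
  have "finite K'" "K' \<subseteq> X"
    using K'(1) assms(4,5) finite_subset by auto
  then obtain xs l where xs: "\<forall>k<n. xs k \<in> X" "l \<in> simplex n"
    "\<And>g. (\<Sum>k<n. l k * g (xs k)) = (\<Sum>x\<in>K'. t' x * g x)"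
    using convex_combination_as_simplex_tuple[of K' n X x\<^sub>0 t'] K'(2-4) \<open>x\<^sub>0 \<in> X\<close>
    by blast
  define a where "a i = (\<Sum>k<n. l k * f i (xs k))" for i
  have "0 \<le> Max (a ` {..<n})"
    using max_nonneg xs(1,2) by (simp add: a_def)
  moreover have "Max (a ` {..<n}) \<in> a ` {..<n}"
    using assms(1) by (intro Max_in) (auto simp: lessThan_empty_iff)
  moreover have "a i < 0" if "i < n" for i
    using K'(5) xs(3) that by (simp add: a_def)
  ultimately show False
    by force
qed

lemma max_zero_add_square_le: "(max (a + b) 0)\<^sup>2 \<le> (max a 0 + b)\<^sup>2" for a b :: real
proof (cases "a + b \<le> 0")
  case False
  then have "(a + b)\<^sup>2 \<le> (max a 0 + b)\<^sup>2"
    by (intro power_mono) auto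
  then show ?thesis
    using False by simp
qed simp

lemma nonneg_if_nonneg_perturbations:
  fixes a b :: real
  assumes "\<And>s. 0 < s \<Longrightarrow> s \<le> 1 \<Longrightarrow> 0 \<le> a + s * b"
  shows "0 \<le> a"
proof (rule tendsto_lowerbound)
  show "((\<lambda>s. a + s * b) \<longlongrightarrow> a) (at_right 0)"
    by (auto intro!: tendsto_eq_intros)
  show "\<forall>\<^sub>F s in at_right 0. 0 \<le> a + s * b"
    using assms by (auto simp: eventually_at_right_field intro!: exI[of _ 1])
qed simp

lemma pos_part_minimizer_variational_inequality:
  fixes w :: "'k \<Rightarrow> nat \<Rightarrow> real"
  assumes c_def: "\<And>t i. c t i = (\<Sum>k\<in>K. t k * w k i)"
    and "finite K" "k \<in> K" "t\<^sub>0 \<in> convex_weights K"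
    and min: "\<And>t. t \<in> convex_weights K \<Longrightarrow>
      (\<Sum>i<n. (max (c t\<^sub>0 i) 0)\<^sup>2) \<le> (\<Sum>i<n. (max (c t i) 0)\<^sup>2)"
  shows "0 \<le> (\<Sum>i<n. max (c t\<^sub>0 i) 0 * (w k i - c t\<^sub>0 i))"
proof -
  define p where "p i = max (c t\<^sub>0 i) 0" for i
  define d where "d i = w k i - c t\<^sub>0 i" for i
  have "0 \<le> 2 * (\<Sum>i<n. p i * d i) + s * (\<Sum>i<n. (d i)\<^sup>2)" if "0 < s" "s \<le> 1" for s
  proof -
    define t where "t q = (1 - s) * t\<^sub>0 q + s * (if q = k then 1 else 0)" for q
    have "t \<in> convex_weights K"
      unfolding t_def using assms(2-4) that
      by (intro convex_weights_segment vertex_in_convex_weights) auto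
    have c_t: "c t i = c t\<^sub>0 i + s * d i" for i
    proof -
      have "c t i = (1 - s) * c t\<^sub>0 i + s * (\<Sum>q\<in>K. (if q = k then 1 else 0) * w q i)"
        by (simp add: c_def t_def distrib_right sum.distrib sum_distrib_left mult.assoc)
      also have "(\<Sum>q\<in>K. (if q = k then 1 else 0) * w q i) = (\<Sum>q\<in>K. if q = k then w k i else 0)"
        by (rule sum.cong) auto
      also have "\<dots> = w k i"
        using assms(2,3) by simp
      finally show ?thesis
        by (simp add: d_def algebra_simps)
    qed
    have "(\<Sum>i<n. (p i)\<^sup>2) \<le> (\<Sum>i<n. (max (c t i) 0)\<^sup>2)"
      using min[OF \<open>t \<in> convex_weights K\<close>] by (simp add: p_def)
    also have "\<dots> \<le> (\<Sum>i<n. (p i + s * d i)\<^sup>2)"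
      unfolding c_t p_def by (intro sum_mono max_zero_add_square_le)
    also have "\<dots> = (\<Sum>i<n. (p i)\<^sup>2) + s * (2 * (\<Sum>i<n. p i * d i) + s * (\<Sum>i<n. (d i)\<^sup>2))"
      by (simp add: power2_eq_square algebra_simps sum.distrib sum_distrib_left)
    finally show ?thesis
      using \<open>0 < s\<close> by (simp add: zero_le_mult_iff)
  qed
  then have "0 \<le> 2 * (\<Sum>i<n. p i * d i)"
    by (rule nonneg_if_nonneg_perturbations)
  then show ?thesis
    by (simp add: p_def d_def)
qed

lemma compactin_attains_min:
  assumes "compactin X S" "S \<noteq> {}" "continuous_map X euclideanreal \<phi>"
  obtains t\<^sub>0 where "t\<^sub>0 \<in> S" "\<And>t. t \<in> S \<Longrightarrow> \<phi> t\<^sub>0 \<le> \<phi> t"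
proof -
  have "compactin euclideanreal (\<phi> ` S)"
    using image_compactin assms(1,3) .
  then have "compact (\<phi> ` S)"
    by simp
  then obtain y where "y \<in> \<phi> ` S" "\<forall>z\<in>\<phi> ` S. y \<le> z"
    using compact_attains_inf assms(2) by blast
  with that show ?thesis
    by blast
qed

lemma gordan_alternative:
  fixes w :: "'k \<Rightarrow> nat \<Rightarrow> real"
  assumes "finite K" "K \<noteq> {}"
    and no_nonpos: "\<And>t. t \<in> convex_weights K \<Longrightarrow> \<exists>i<n. 0 < (\<Sum>k\<in>K. t k * w k i)"
  shows "\<exists>l\<in>simplex n. \<forall>k\<in>K. 0 \<le> (\<Sum>i<n. l i * w k i)"
proof -
  define c where "c t i = (\<Sum>k\<in>K. t k * w k i)" for t :: "'k \<Rightarrow> real" and i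
  \<comment> \<open>the squared distance of \<open>c t\<close> from the closed negative orthant\<close>
  define \<phi> where "\<phi> t = (\<Sum>i<n. (max (c t i) 0)\<^sup>2)" for t
  have "continuous_map (powertop_real UNIV) euclideanreal \<phi>"
    unfolding \<phi>_def c_def by (intro continuous_intros) (auto simp: assms(1))
  moreover obtain k where "k \<in> K"
    using assms(2) by blast
  then have "convex_weights K \<noteq> {}"
    using vertex_in_convex_weights[OF assms(1)] by blast
  ultimately obtain t\<^sub>0 where t\<^sub>0: "t\<^sub>0 \<in> convex_weights K"
    and min: "\<And>t. t \<in> convex_weights K \<Longrightarrow> \<phi> t\<^sub>0 \<le> \<phi> t"
    using compactin_attains_min[OF compactin_convex_weights[OF assms(1)]] by blast
  define p where "p i = max (c t\<^sub>0 i) 0" for i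
  obtain i\<^sub>0 where "i\<^sub>0 < n" "0 < p i\<^sub>0"
    using no_nonpos[OF t\<^sub>0] by (auto simp: p_def c_def)
  then have "0 < (\<Sum>i<n. p i)"
    using member_le_sum[of i\<^sub>0 "{..<n}" p] by (fastforce simp: p_def)
  define l where "l i = (if i < n then p i / (\<Sum>i<n. p i) else 0)" for i
  have "l \<in> simplex n"
    using \<open>0 < (\<Sum>i<n. p i)\<close>
    by (auto simp: simplex_def l_def p_def sum_divide_distrib[symmetric])
  moreover have "0 \<le> (\<Sum>i<n. l i * w k i)" if "k \<in> K" for k
  proof -
    have "0 \<le> (\<Sum>i<n. p i * (w k i - c t\<^sub>0 i))"
      unfolding p_def
      by (rule pos_part_minimizer_variational_inequality[OF c_def assms(1) that t\<^sub>0])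
        (use min in \<open>simp add: \<phi>_def\<close>)
    also have "\<dots> \<le> (\<Sum>i<n. p i * w k i)"
      by (intro sum_mono) (auto simp: p_def algebra_simps max_def)
    finally show ?thesis
      using \<open>0 < (\<Sum>i<n. p i)\<close> by (simp add: l_def sum_divide_distrib[symmetric])
  qed
  ultimately show ?thesis
    by blast
qed

lemma simplex_approx_nonneg_on_finite:
  fixes f :: "nat \<Rightarrow> 'a \<Rightarrow> real"
  assumes "1 \<le> n"
    and nonneg_coordinate: "\<And>K t. finite K \<Longrightarrow> K \<subseteq> X \<Longrightarrow> \<forall>x\<in>K. 0 \<le> t x \<Longrightarrow>
      sum t K = 1 \<Longrightarrow> \<exists>i<n. 0 \<le> (\<Sum>x\<in>K. t x * f i x)"
    and "finite F" "F \<subseteq> X" "0 < e"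
  shows "\<exists>l\<in>simplex n. \<forall>x\<in>F. -e \<le> (\<Sum>j<n. l j * f j x)"
proof (cases "F = {}")
  case True
  have "(\<lambda>j. if j = 0 then 1 else 0) \<in> simplex n"
    using assms(1) by (simp add: simplex_eq_convex_weights vertex_in_convex_weights)
  then show ?thesis
    using True by blast
next
  case False
  define w where "w x i = f i x + e" for x i
  have "\<exists>i<n. 0 < (\<Sum>x\<in>F. t x * w x i)" if "t \<in> convex_weights F" for t
  proof -
    have "\<forall>x\<in>F. 0 \<le> t x" "sum t F = 1"
      using that by (auto simp: convex_weights_def)
    then obtain i where "i < n" "0 \<le> (\<Sum>x\<in>F. t x * f i x)"
      using nonneg_coordinate assms(3,4) by blast
    moreover have "(\<Sum>x\<in>F. t x * w x i) = (\<Sum>x\<in>F. t x * f i x) + e"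
      using that by (simp add: w_def distrib_left sum.distrib convex_weights_def flip: sum_distrib_right)
    ultimately show ?thesis
      using \<open>0 < e\<close> by auto
  qed
  then obtain l where "l \<in> simplex n" "\<forall>x\<in>F. 0 \<le> (\<Sum>i<n. l i * w x i)"
    using gordan_alternative[OF assms(3) False] by blast
  moreover have "(\<Sum>i<n. l i * w x i) = (\<Sum>j<n. l j * f j x) + e" for x
    using \<open>l \<in> simplex n\<close>
    by (simp add: w_def distrib_left sum.distrib simplex_def flip: sum_distrib_right)
  ultimately show ?thesis
    by force
qed

lemma simplex_nonneg_if_approx:
  fixes f :: "nat \<Rightarrow> 'a \<Rightarrow> real"
  assumes "1 \<le> n"
    and approx: "\<And>F e. finite F \<Longrightarrow> F \<subseteq> X \<Longrightarrow> 0 < e \<Longrightarrow>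
      \<exists>l\<in>simplex n. \<forall>x\<in>F. -e \<le> (\<Sum>j<n. l j * f j x)"
  shows "\<exists>l\<in>simplex n. \<forall>x\<in>X. 0 \<le> (\<Sum>j<n. l j * f j x)"
proof -
  define A where "A = (\<lambda>(x, e). {l. -e \<le> (\<Sum>j<n. l j * f j x)})"
  define \<U> where "\<U> = A ` (X \<times> {0<..})"
  have "compactin (powertop_real UNIV) (simplex n)"
    by (simp add: simplex_eq_convex_weights compactin_convex_weights)
  moreover have "closedin (powertop_real UNIV) (A p)" for p
  proof (cases p)
    case (Pair x e)
    have "closedin (powertop_real UNIV)
        {l \<in> topspace (powertop_real UNIV). (\<Sum>j<n. l j * f j x) \<in> {-e..}}"
      by (intro closedin_continuous_map_preimage[where Y = euclideanreal] continuous_intros) auto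
    then show ?thesis
      by (simp add: A_def Pair)
  qed
  then have "\<forall>C\<in>\<U>. closedin (powertop_real UNIV) C"
    by (simp add: \<U>_def)
  moreover have "simplex n \<inter> \<Inter>\<F> \<noteq> {}" if \<F>: "finite \<F>" "\<F> \<subseteq> \<U>" for \<F>
  proof -
    obtain C where C: "C \<subseteq> X \<times> {0<..}" "finite C" "\<F> = A ` C"
      using finite_subset_image[OF \<F>[unfolded \<U>_def]] by blast
    define e where "e = Min (insert 1 (snd ` C))"
    have "0 < e"
      using C(1,2) by (auto simp: e_def)
    then obtain l where l: "l \<in> simplex n" "\<forall>x\<in>fst ` C. -e \<le> (\<Sum>j<n. l j * f j x)"
      using approx[of "fst ` C" e] C(1,2) by force
    have "e \<le> e'" if "(x, e') \<in> C" for x e'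
      unfolding e_def by (rule Min_le) (use C(2) that in force)+
    then have "l \<in> \<Inter>\<F>"
      using l(2) by (fastforce simp: C(3) A_def)
    with l(1) show ?thesis
      by blast
  qed
  ultimately have "simplex n \<inter> \<Inter>\<U> \<noteq> {}"
    unfolding compactin_fip by blast
  then obtain l where l: "l \<in> simplex n" "l \<in> \<Inter>\<U>"
    by blast
  have "0 \<le> (\<Sum>j<n. l j * f j x)" if "x \<in> X" for x
  proof (rule field_le_epsilon)
    fix e :: real
    assume "0 < e"
    then have "l \<in> A (x, e)"
      using l(2) that by (auto simp: \<U>_def)
    then show "0 \<le> (\<Sum>j<n. l j * f j x) + e"
      by (simp add: A_def)
  qed
  with l(1) show ?thesis
    by blast
qed

theorem theorem2p2:
  fixes X :: "'a set" and n :: nat and f :: "nat \<Rightarrow> 'a \<Rightarrow> real"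
  assumes "X \<noteq> {}" and "n \<ge> 1"
  shows "(\<exists>l\<in>simplex n. \<forall>x\<in>X. 0 \<le> (\<Sum>j<n. l j * f j x))
     \<longleftrightarrow> (\<forall>xs. (\<forall>k<n. xs k \<in> X) \<longrightarrow> (\<forall>t\<in>simplex n.
            0 \<le> Max ((\<lambda>i. \<Sum>k<n. t k * f i (xs k)) ` {..<n})))"
proof
  assume "\<exists>l\<in>simplex n. \<forall>x\<in>X. 0 \<le> (\<Sum>j<n. l j * f j x)"
  then show "\<forall>xs. (\<forall>k<n. xs k \<in> X) \<longrightarrow> (\<forall>t\<in>simplex n.
      0 \<le> Max ((\<lambda>i. \<Sum>k<n. t k * f i (xs k)) ` {..<n}))"
    using Max_nonneg_if_simplex_nonneg by blast
next
  assume max_nonneg: "\<forall>xs. (\<forall>k<n. xs k \<in> X) \<longrightarrow> (\<forall>t\<in>simplex n.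
      0 \<le> Max ((\<lambda>i. \<Sum>k<n. t k * f i (xs k)) ` {..<n}))"
  have nonneg_coordinate: "\<exists>i<n. 0 \<le> (\<Sum>x\<in>K. t x * f i x)"
    if "finite K" "K \<subseteq> X" "\<forall>x\<in>K. 0 \<le> t x" "sum t K = 1" for K t
    using convex_combination_has_nonneg_coordinate[OF assms(2,1) max_nonneg that] .
  have "\<exists>l\<in>simplex n. \<forall>x\<in>F. -e \<le> (\<Sum>j<n. l j * f j x)"
    if "finite F" "F \<subseteq> X" "0 < e" for F e
    using simplex_approx_nonneg_on_finite[OF assms(2) nonneg_coordinate that] .
  then show "\<exists>l\<in>simplex n. \<forall>x\<in>X. 0 \<le> (\<Sum>j<n. l j * f j x)"
    by (rule simplex_nonneg_if_approx[OF assms(2)])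
qed

end
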